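(* Let $\mathcal{D}=(\mathcal{P},\mathcal{L})$ be a $(G,2)$-point-transitive linear space with $|\mathcal{P}|\ge4$, where $G\le\mathrm{Aut}(\mathcal{D})$. Let $(\sigma,L)$ be an antiflag of $\mathcal{D}$ such that $\Omega=(\sigma,\mathcal{P}\setminus L)^G$ is a feasible $G$-orbit on the set of flags of the complement $\overline{\mathcal{D}}$. Then either $G_L$ is 2-transitive on $\mathcal{P}\setminus L$, or $G_L\le G_\sigma$ and $|L|(|L|-1)$ divides $|\mathcal{P}|-1$. Moreover, if $L=\{\alpha,\beta\}$, then either $|\mathcal{P}|=4$ and $G=A_4$, or $G_{\alpha,\beta}$ is transitive on $\mathcal{P}\setminus\{\alpha,\beta\}$, or $|\mathcal{P}|$ is odd and $G_{\alpha,\beta}\le G_\sigma$ is $\tfrac12$-transitive on $\mathcal{P}\setminus\{\alpha,\beta,\sigma\}$.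
   Context: All groups are finite. A linear space is an incidence structure of points and lines (lines identified with point sets) in which each line has at least two points and any two points lie on exactly one line; $(G,2)$-point-transitive means $G$ acts as automorphisms, 2-transitively on points. An antiflag is a pair $(\sigma,L)$ with $L$ a line and $\sigma\notin L$. The complement $\overline{\mathcal{D}}$ has point set $\mathcal{P}$ and blocks $\mathcal{P}\setminus L$, $L\in\mathcal{L}$; its flags are pairs (point, block containing it). For a $G$-orbit $\Omega$ on flags and a point $\sigma$, $\Omega(\sigma)$ is the set of flags of $\Omega$ with point-entry $\sigma$; $\Omega$ is feasible if $|\Omega(\sigma)|\ge2$ and, for a flag $(\sigma,M)\in\Omega$, the setwise stabilizer $G_{\sigma,M}$ of $M$ in $G_\sigma$ is transitive on $M\setminus\{\sigma\}$. $G_L$ is the setwise stabilizer of $L$, $G_{\alpha,\beta}=G_\alpha\cap G_\beta$. A group is $\tfrac12$-transitive on a set if all its orbits on that set have the same length. *)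

theory Defs
  imports "HOL-Combinatorics.Combinatorics"
begin

definition linear_space :: "'a set \<Rightarrow> 'a set set \<Rightarrow> bool" where
  "linear_space P Lines \<longleftrightarrow> finite P \<and>
     (\<forall>l\<in>Lines. l \<subseteq> P \<and> card l \<ge> 2) \<and>
     (\<forall>x\<in>P. \<forall>y\<in>P. x \<noteq> y \<longrightarrow> (\<exists>!l. l \<in> Lines \<and> x \<in> l \<and> y \<in> l))"

text \<open>G is a group of automorphisms of (P, Lines), represented by its faithful action
  on the points (automorphisms of a linear space are determined by the point map).\<close>
definition aut_group :: "'a set \<Rightarrow> 'a set set \<Rightarrow> ('a \<Rightarrow> 'a) set \<Rightarrow> bool" where
  "aut_group P Lines G \<longleftrightarrow> id \<in> G \<and>
     (\<forall>g\<in>G. \<forall>h\<in>G. g \<circ> h \<in> G) \<and>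
     (\<forall>g\<in>G. inv g \<in> G) \<and>
     (\<forall>g\<in>G. g permutes P \<and> (\<lambda>l. g ` l) ` Lines = Lines)"

definition point_stab :: "('a \<Rightarrow> 'a) set \<Rightarrow> 'a \<Rightarrow> ('a \<Rightarrow> 'a) set" where
  "point_stab H x = {g\<in>H. g x = x}"

definition set_stab :: "('a \<Rightarrow> 'a) set \<Rightarrow> 'a set \<Rightarrow> ('a \<Rightarrow> 'a) set" where
  "set_stab H S = {g\<in>H. g ` S = S}"

definition transitive_on :: "('a \<Rightarrow> 'a) set \<Rightarrow> 'a set \<Rightarrow> bool" where
  "transitive_on H S \<longleftrightarrow> (\<forall>x\<in>S. \<forall>y\<in>S. \<exists>g\<in>H. g x = y)"

definition two_transitive_on :: "('a \<Rightarrow> 'a) set \<Rightarrow> 'a set \<Rightarrow> bool" where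
  "two_transitive_on H S \<longleftrightarrow>
     (\<forall>x\<in>S. \<forall>y\<in>S. \<forall>u\<in>S. \<forall>v\<in>S. x \<noteq> y \<longrightarrow> u \<noteq> v \<longrightarrow>
        (\<exists>g\<in>H. g x = u \<and> g y = v))"

definition orbit_of :: "('a \<Rightarrow> 'a) set \<Rightarrow> 'a \<Rightarrow> 'a set" where
  "orbit_of H x = (\<lambda>g. g x) ` H"

definition half_transitive_on :: "('a \<Rightarrow> 'a) set \<Rightarrow> 'a set \<Rightarrow> bool" where
  "half_transitive_on H S \<longleftrightarrow>
     (\<forall>x\<in>S. \<forall>y\<in>S. card (orbit_of H x) = card (orbit_of H y))"

text \<open>The G-orbit of the flag (sigma, P - L) of the complement design.\<close>
definition flag_orbit :: "('a \<Rightarrow> 'a) set \<Rightarrow> 'a \<Rightarrow> 'a set \<Rightarrow> ('a \<times> 'a set) set" where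
  "flag_orbit G \<sigma> M = (\<lambda>g. (g \<sigma>, g ` M)) ` G"

definition orbit_at :: "('a \<times> 'a set) set \<Rightarrow> 'a \<Rightarrow> ('a \<times> 'a set) set" where
  "orbit_at \<Omega> \<tau> = {f\<in>\<Omega>. fst f = \<tau>}"

definition feasible :: "'a set \<Rightarrow> ('a \<Rightarrow> 'a) set \<Rightarrow> ('a \<times> 'a set) set \<Rightarrow> bool" where
  "feasible P G \<Omega> \<longleftrightarrow>
     (\<forall>\<tau>\<in>P. card (orbit_at \<Omega> \<tau>) \<ge> 2) \<and>
     (\<forall>(\<tau>, M)\<in>\<Omega>. transitive_on (set_stab (point_stab G \<tau>) M) (M - {\<tau>}))"

end

theory Submission
  imports Defs
begin

(* If some element of G_L moves sigma, feasibility (G_{sigma,L} is transitive on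
   P - L - {sigma}) makes G_L 2-transitive on P - L.  Otherwise G_L <= G_sigma, so
   g L |-> g sigma is a well-defined G-equivariant map from the lines, all of which
   are images of L, onto the points; its fibres have a common size m, and counting
   ordered pairs of distinct points by the line they span gives
   v (v - 1) = v m k (k - 1).

   For L = {alpha, beta} the group N = G_{alpha,beta} is normalised by G_L.  If G_L is
   2-transitive on P - L, then N is transitive there as soon as it moves a point of
   P - L; if it does not, N = 1, every non-identity element of G_L swaps alpha and
   beta, which forces |P - L| = 2, and G is sharply 2-transitive of degree 4, i.e. A_4.
   If instead G_L <= G_sigma, then 2 divides v - 1, and N, being normalised by the
   transitive group G_{sigma,L}, has orbits of equal length on P - {alpha,beta,sigma}. *)

section \<open>Permutation groups\<close>

locale perm_group =
  fixes P :: "'a set" and G :: "('a \<Rightarrow> 'a) set"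
  assumes id_mem: "id \<in> G"
    and comp_mem: "g \<in> G \<Longrightarrow> h \<in> G \<Longrightarrow> g \<circ> h \<in> G"
    and inv_mem: "g \<in> G \<Longrightarrow> inv g \<in> G"
    and permutes_mem: "g \<in> G \<Longrightarrow> g permutes P"

lemma perm_group_if_aut_group: "aut_group P Lines G \<Longrightarrow> perm_group P G"
  by unfold_locales (simp_all add: aut_group_def)

context perm_group
begin

lemma apply_inv_mem: "g \<in> G \<Longrightarrow> g (inv g x) = x"
  by (rule permutes_inverses(1)[OF permutes_mem])

lemma inv_apply_mem: "g \<in> G \<Longrightarrow> inv g (g x) = x"
  by (rule permutes_inverses(2)[OF permutes_mem])

lemma inv_inv_mem: "g \<in> G \<Longrightarrow> inv (inv g) = g"
  by (rule inv_inv_eq[OF permutes_bij[OF permutes_mem]])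

lemma apply_mem_iff: "g \<in> G \<Longrightarrow> g x \<in> P \<longleftrightarrow> x \<in> P"
  by (rule permutes_in_image[OF permutes_mem])

lemma apply_eq_iff: "g \<in> G \<Longrightarrow> g x = g y \<longleftrightarrow> x = y"
  using permutes_inj[OF permutes_mem] by (auto dest: injD)

lemma inv_image_eq: "g \<in> G \<Longrightarrow> g ` A = B \<Longrightarrow> inv g ` B = A"
  using image_inv_f_f[OF permutes_inj[OF permutes_mem]] by blast

lemma conj_mem: "g \<in> G \<Longrightarrow> h \<in> G \<Longrightarrow> g \<circ> h \<circ> inv g \<in> G"
  by (simp add: comp_mem inv_mem)

lemma apply_outside: "g \<in> G \<Longrightarrow> w \<notin> P \<Longrightarrow> g w = w"
  by (rule permutes_not_in[OF permutes_mem])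

lemma permutation_mem: "finite P \<Longrightarrow> g \<in> G \<Longrightarrow> permutation g"
  by (rule permutes_imp_permutation[OF _ permutes_mem])

lemma finite_group: "finite P \<Longrightarrow> finite G"
  using finite_subset[OF _ finite_permutations] permutes_mem by blast

lemma perm_group_point_stab: "perm_group P (point_stab G x)"
  by unfold_locales
    (auto simp: point_stab_def id_mem comp_mem inv_mem permutes_mem dest: inv_apply_mem[of _ x])

lemma perm_group_set_stab: "perm_group P (set_stab G A)"
proof unfold_locales
  fix g h assume "g \<in> set_stab G A" "h \<in> set_stab G A"
  then show "g \<circ> h \<in> set_stab G A"
    unfolding set_stab_def by (metis (mono_tags, lifting) comp_mem image_comp mem_Collect_eq)
next
  fix g assume "g \<in> set_stab G A"
  then show "inv g \<in> set_stab G A" by (simp add: set_stab_def inv_mem inv_image_eq)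
qed (simp_all add: set_stab_def id_mem permutes_mem)

lemma set_stab_Diff:
  assumes "A \<subseteq> P"
  shows "set_stab G (P - A) = set_stab G A"
proof -
  have "g ` (P - A) = P - A \<longleftrightarrow> g ` A = A" if g: "g \<in> G" for g
  proof -
    have "g ` (P - A) = P - g ` A"
      using image_set_diff[OF permutes_inj[OF permutes_mem[OF g]]] permutes_image[OF permutes_mem[OF g]]
      by simp
    moreover have "g ` A \<subseteq> P" using assms permutes_image[OF permutes_mem[OF g]] by blast
    ultimately show ?thesis using assms by (metis Diff_Diff_Int inf.absorb2)
  qed
  then show ?thesis unfolding set_stab_def by blast
qed

lemma transitive_on_if_two_transitive_on:
  assumes "two_transitive_on G S"
  shows "transitive_on G S"
  unfolding transitive_on_def
proof (intro ballI)
  fix x y assume "x \<in> S" "y \<in> S"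
  show "\<exists>g\<in>G. g x = y"
  proof (cases "x = y")
    case True
    then show ?thesis using id_mem by (intro bexI[of _ id]) auto
  next
    case False
    then have "\<exists>g\<in>G. g x = y \<and> g y = x"
      using assms \<open>x \<in> S\<close> \<open>y \<in> S\<close> unfolding two_transitive_on_def by auto
    then show ?thesis by blast
  qed
qed

lemma transitive_on_if_point_stab_transitive_on:
  assumes stable: "\<And>g. g \<in> G \<Longrightarrow> g ` S \<subseteq> S"
    and \<sigma>: "\<sigma> \<in> S" and stab: "transitive_on (point_stab G \<sigma>) (S - {\<sigma>})"
    and h: "h \<in> G" "h \<sigma> \<noteq> \<sigma>"
  shows "transitive_on G S"
proof -
  have from_\<sigma>: "\<exists>g\<in>G. g \<sigma> = z" if z: "z \<in> S" for z
  proof (cases "z = \<sigma>")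
    case True
    then show ?thesis using id_mem by (intro bexI[of _ id]) auto
  next
    case False
    have "h \<sigma> \<in> S - {\<sigma>}" using stable[OF h(1)] \<sigma> h(2) by auto
    then obtain k where "k \<in> point_stab G \<sigma>" "k (h \<sigma>) = z"
      using stab z False unfolding transitive_on_def by blast
    then have "k \<circ> h \<in> G" "(k \<circ> h) \<sigma> = z" using comp_mem h(1) unfolding point_stab_def by auto
    then show ?thesis by blast
  qed
  show ?thesis
    unfolding transitive_on_def
  proof (intro ballI)
    fix x y assume "x \<in> S" "y \<in> S"
    obtain a where a: "a \<in> G" "a \<sigma> = x" using from_\<sigma>[OF \<open>x \<in> S\<close>] by blast
    obtain b where b: "b \<in> G" "b \<sigma> = y" using from_\<sigma>[OF \<open>y \<in> S\<close>] by blast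
    have "b \<circ> inv a \<in> G" using a(1) b(1) by (simp add: comp_mem inv_mem)
    moreover have "(b \<circ> inv a) x = y" using inv_apply_mem[OF a(1), of \<sigma>] a(2) b(2) by simp
    ultimately show "\<exists>g\<in>G. g x = y" by blast
  qed
qed

lemma two_transitive_on_if_point_stab_transitive_on:
  assumes stable: "\<And>g. g \<in> G \<Longrightarrow> g ` S \<subseteq> S"
    and \<sigma>: "\<sigma> \<in> S" and trans: "transitive_on G S"
    and stab: "transitive_on (point_stab G \<sigma>) (S - {\<sigma>})"
  shows "two_transitive_on G S"
proof -
  have to_\<sigma>: "\<exists>g\<in>G. g x = \<sigma> \<and> g y \<in> S - {\<sigma>}" if xy: "x \<in> S" "y \<in> S" "x \<noteq> y" for x y
  proof -
    obtain a where a: "a \<in> G" "a x = \<sigma>" using trans xy(1) \<sigma> unfolding transitive_on_def by blast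
    moreover have "a y \<noteq> \<sigma>" using apply_eq_iff[OF a(1)] a(2) xy(3) by metis
    moreover have "a y \<in> S" using stable[OF a(1)] xy(2) by blast
    ultimately show ?thesis by blast
  qed
  show ?thesis
    unfolding two_transitive_on_def
  proof (intro ballI impI)
    fix x y u w assume "x \<in> S" "y \<in> S" "u \<in> S" "w \<in> S" "x \<noteq> y" "u \<noteq> w"
    then obtain a c where a: "a \<in> G" "a x = \<sigma>" "a y \<in> S - {\<sigma>}"
      and c: "c \<in> G" "c u = \<sigma>" "c w \<in> S - {\<sigma>}"
      using to_\<sigma>[of x y] to_\<sigma>[of u w] by blast
    obtain k where k: "k \<in> G" "k \<sigma> = \<sigma>" "k (a y) = c w"
      using stab a(3) c(3) unfolding transitive_on_def point_stab_def by blast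
    have "inv c \<circ> k \<circ> a \<in> G" using k(1) a(1) c(1) by (simp add: comp_mem inv_mem)
    moreover have "(inv c \<circ> k \<circ> a) x = u" "(inv c \<circ> k \<circ> a) y = w"
      using a(2) c(2) k(2,3) inv_apply_mem[OF c(1), of u] inv_apply_mem[OF c(1), of w] by simp_all
    ultimately show "\<exists>g\<in>G. g x = u \<and> g y = w" by blast
  qed
qed

lemma transitive_on_if_normalized:
  assumes tt: "two_transitive_on G S"
    and normal: "\<And>g n. g \<in> G \<Longrightarrow> n \<in> N \<Longrightarrow> g \<circ> n \<circ> inv g \<in> N" and "id \<in> N"
    and n: "n \<in> N" "x \<in> S" "n x \<in> S" "n x \<noteq> x"
  shows "transitive_on N S"
  unfolding transitive_on_def
proof (intro ballI)
  fix y z assume "y \<in> S" "z \<in> S"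
  show "\<exists>m\<in>N. m y = z"
  proof (cases "y = z")
    case True
    then show ?thesis using \<open>id \<in> N\<close> by (intro bexI[of _ id]) auto
  next
    case False
    then obtain g where "g \<in> G" "g x = y" "g (n x) = z"
      using tt n \<open>y \<in> S\<close> \<open>z \<in> S\<close> unfolding two_transitive_on_def by metis
    then have "(g \<circ> n \<circ> inv g) y = z" using inv_apply_mem by force
    then show ?thesis using normal \<open>g \<in> G\<close> n(1) by blast
  qed
qed

lemma half_transitive_on_if_normalized:
  assumes trans: "transitive_on G S"
    and normal: "\<And>g n. g \<in> G \<Longrightarrow> n \<in> N \<Longrightarrow> g \<circ> n \<circ> inv g \<in> N"
  shows "half_transitive_on N S"
  unfolding half_transitive_on_def
proof (intro ballI)
  fix x y assume "x \<in> S" "y \<in> S"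
  then obtain g where g: "g \<in> G" "g x = y" using trans unfolding transitive_on_def by blast
  have "orbit_of N y = g ` orbit_of N x"
  proof (intro equalityI subsetI)
    fix z assume "z \<in> orbit_of N y"
    then obtain n where n: "n \<in> N" "z = n y" unfolding orbit_of_def by blast
    have "inv g \<circ> n \<circ> g \<in> N" using normal[OF inv_mem[OF g(1)] n(1)] inv_inv_mem[OF g(1)] by simp
    moreover have "z = g ((inv g \<circ> n \<circ> g) x)" using n(2) g by (simp add: apply_inv_mem)
    ultimately show "z \<in> g ` orbit_of N x" unfolding orbit_of_def by blast
  next
    fix z assume "z \<in> g ` orbit_of N x"
    then obtain n where n: "n \<in> N" "z = g (n x)" unfolding orbit_of_def by blast
    then have "z = (g \<circ> n \<circ> inv g) y" using g inv_apply_mem by force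
    then show "z \<in> orbit_of N y" using normal[OF g(1) n(1)] unfolding orbit_of_def by blast
  qed
  then show "card (orbit_of N x) = card (orbit_of N y)"
    using card_image[OF inj_on_subset[OF permutes_inj[OF permutes_mem[OF g(1)]]]] by simp
qed

lemma conj_mem_two_point_stab:
  assumes g: "g \<in> set_stab G {\<alpha>, \<beta>}" and n: "n \<in> point_stab (point_stab G \<alpha>) \<beta>"
  shows "g \<circ> n \<circ> inv g \<in> point_stab (point_stab G \<alpha>) \<beta>"
proof -
  have "g \<in> G" "g ` {\<alpha>, \<beta>} = {\<alpha>, \<beta>}" using g unfolding set_stab_def by auto
  then have "inv g ` {\<alpha>, \<beta>} = {\<alpha>, \<beta>}" by (rule inv_image_eq)
  then have "inv g \<alpha> \<in> {\<alpha>, \<beta>}" "inv g \<beta> \<in> {\<alpha>, \<beta>}" by blast+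
  moreover have "n \<in> G" "n \<alpha> = \<alpha>" "n \<beta> = \<beta>" using n unfolding point_stab_def by auto
  ultimately have "n (inv g \<alpha>) = inv g \<alpha>" "n (inv g \<beta>) = inv g \<beta>" by auto
  then show ?thesis
    unfolding point_stab_def using \<open>g \<in> G\<close> \<open>n \<in> G\<close> by (simp add: conj_mem apply_inv_mem)
qed

end

section \<open>Sharply 2-transitive groups of degree 4\<close>

lemma card_eq_4_extend_point:
  assumes "card P = 4" "t \<in> P"
  obtains x y z where "P = {t, x, y, z}" "distinct [t, x, y, z]"
proof -
  have "finite P" by (rule card_ge_0_finite) (simp add: assms(1))
  then have "card (P - {t}) = 3" using assms by simp
  then obtain x y z where xyz: "P - {t} = {x, y, z}" "x \<noteq> y" "y \<noteq> z" "x \<noteq> z"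
    unfolding card_3_iff by blast
  have "P = {t, x, y, z}" using xyz(1) assms(2) by blast
  moreover have "t \<notin> {x, y, z}" using xyz(1) by blast
  ultimately show ?thesis using that xyz(2-4) by simp
qed

lemma card_eq_4_extend_pair:
  assumes "card P = 4" "a \<in> P" "b \<in> P" "a \<noteq> b"
  obtains c d where "P = {a, b, c, d}" "distinct [a, b, c, d]"
proof -
  have "finite P" by (rule card_ge_0_finite) (simp add: assms(1))
  then have "card (P - {a, b}) = 2" using assms by (simp add: card_Diff_subset)
  then obtain c d where cd: "P - {a, b} = {c, d}" "c \<noteq> d" unfolding card_2_iff by blast
  have "P = {a, b, c, d}" using cd(1) assms(2,3) by blast
  moreover have "a \<notin> {c, d}" "b \<notin> {c, d}" using cd(1) by blast+
  ultimately show ?thesis using that cd(2) assms(4) by simp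
qed

lemma evenperm_three_cycle:
  assumes "distinct [x, y, z]" and "g x = y" "g y = z" "g z = x"
    and "\<And>w. w \<notin> {x, y, z} \<Longrightarrow> g w = w"
  shows "evenperm g"
proof -
  have d: "x \<noteq> y" "y \<noteq> x" "x \<noteq> z" "z \<noteq> x" "y \<noteq> z" "z \<noteq> y" using assms(1) by auto
  have "g w = (transpose x z \<circ> transpose x y) w" for w
    using assms(2-5) d
    by (cases "w = x"; cases "w = y"; cases "w = z") (simp_all add: transpose_def)
  then have "g = transpose x z \<circ> transpose x y" ..
  then show ?thesis using assms(1) by (simp add: evenperm_comp permutation_swap_id evenperm_swap)
qed

lemma evenperm_double_transposition:
  assumes "distinct [a, b, c, d]" and "g a = b" "g b = a" "g c = d" "g d = c"
    and "\<And>w. w \<notin> {a, b, c, d} \<Longrightarrow> g w = w"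
  shows "evenperm g"
proof -
  have "a \<noteq> b" "b \<noteq> a" "a \<noteq> c" "c \<noteq> a" "a \<noteq> d" "d \<noteq> a"
    "b \<noteq> c" "c \<noteq> b" "b \<noteq> d" "d \<noteq> b" "c \<noteq> d" "d \<noteq> c"
    using assms(1) by auto
  then have "g w = (transpose a b \<circ> transpose c d) w" for w
    using assms(2-6)
    by (cases "w = a"; cases "w = b"; cases "w = c"; cases "w = d") (simp_all add: transpose_def)
  then have "g = transpose a b \<circ> transpose c d" ..
  then show ?thesis using assms(1) by (simp add: evenperm_comp permutation_swap_id evenperm_swap)
qed

lemma evenperm_fixing_two_points_eq_id:
  assumes q: "q permutes P" "evenperm q" "q a = a" "q b = b"
    and P: "P = {a, b, c, d}" and d: "distinct [a, b, c, d]"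
  shows "q = id"
proof -
  have "q c \<noteq> q a" "q c \<noteq> q b" "q d \<noteq> q a" "q d \<noteq> q b" "q c \<noteq> q d"
    using permutes_inj[OF q(1)] d by (auto dest: injD)
  moreover have "q c \<in> P" "q d \<in> P" using permutes_in_image[OF q(1)] P by auto
  ultimately consider "q c = c" "q d = d" | "q c = d" "q d = c" using P q(3,4) by auto
  then show ?thesis
  proof cases
    case 1
    then have "q w = w" for w using q(3,4) permutes_not_in[OF q(1), of w] P by (cases "w \<in> P") auto
    then show ?thesis by (simp add: fun_eq_iff)
  next
    case 2
    then have "q w = transpose c d w" for w
      using q(3,4) permutes_not_in[OF q(1), of w] P d by (cases "w \<in> P") (auto simp: transpose_def)
    then have "q = transpose c d" ..
    then show ?thesis using q(2) d by (simp add: evenperm_swap)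
  qed
qed

context perm_group
begin

context
  assumes card_4: "card P = 4" and tt: "two_transitive_on G P"
    and sharp: "\<And>g x y. g \<in> G \<Longrightarrow> x \<in> P \<Longrightarrow> y \<in> P \<Longrightarrow> x \<noteq> y \<Longrightarrow> g x = x \<Longrightarrow> g y = y \<Longrightarrow> g = id"
begin

lemma finite_points: "finite P"
  by (rule card_ge_0_finite) (simp add: card_4)

lemma evenperm_mem_if_fixes_point:
  assumes g: "g \<in> G" and t: "t \<in> P" "g t = t"
  shows "evenperm g"
proof -
  obtain x y z where P: "P = {t, x, y, z}" and d: "distinct [t, x, y, z]"
    using card_eq_4_extend_point[OF card_4 t(1)] .
  have outside: "g w = w" if "w \<notin> {x, y, z}" for w
    using that t(2) apply_outside[OF g, of w] P by (cases "w = t") auto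
  show ?thesis
  proof (cases "g x = x \<or> g y = y \<or> g z = z")
    case True
    then have "g = id" using sharp[OF g t(1)] t(2) d P by auto
    then show ?thesis by simp
  next
    case False
    have "g x \<in> P" "g y \<in> P" "g z \<in> P" using apply_mem_iff[OF g] P by auto
    moreover have "g x \<noteq> t" "g y \<noteq> t" "g z \<noteq> t" "g x \<noteq> g y" "g x \<noteq> g z" "g y \<noteq> g z"
      using apply_eq_iff[OF g] t(2) d by auto
    ultimately have "g x \<in> {y, z}" "g y \<in> {x, z}" "g z \<in> {x, y}" using False P by auto
    then have "(g x = y \<and> g y = z \<and> g z = x) \<or> (g x = z \<and> g z = y \<and> g y = x)"
      using \<open>g x \<noteq> g y\<close> \<open>g x \<noteq> g z\<close> \<open>g y \<noteq> g z\<close> by auto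
    then show ?thesis
    proof
      assume "g x = y \<and> g y = z \<and> g z = x"
      then show ?thesis using evenperm_three_cycle[of x y z g] d outside by simp
    next
      assume cycle: "g x = z \<and> g z = y \<and> g y = x"
      have "distinct [x, z, y]" using d by auto
      moreover have "g w = w" if "w \<notin> {x, z, y}" for w using outside that by blast
      ultimately show ?thesis using evenperm_three_cycle cycle by metis
    qed
  qed
qed

lemma evenperm_mem_if_swaps:
  assumes k: "k \<in> G" "a \<in> P" "x \<in> P" "a \<noteq> x" "k a = x" "k x = a"
  shows "evenperm k"
proof -
  obtain y z where P: "P = {a, x, y, z}" and d: "distinct [a, x, y, z]"
    using card_eq_4_extend_pair[OF card_4 k(2-4)] .
  have in_P: "k y \<in> P" "k z \<in> P" using apply_mem_iff[OF k(1)] P by auto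
  have "k y \<noteq> k x" "k y \<noteq> k a" "k z \<noteq> k x" "k z \<noteq> k a" "k y \<noteq> k z"
    using apply_eq_iff[OF k(1)] d by auto
  then have ne: "k y \<noteq> a" "k y \<noteq> x" "k z \<noteq> a" "k z \<noteq> x" "k y \<noteq> k z"
    using k(5,6) by simp_all
  have "k y \<noteq> y"
  proof
    assume "k y = y"
    moreover have "k z = z" using in_P ne \<open>k y = y\<close> P by auto
    ultimately have "k = id" using sharp[OF k(1), of y z] P d by simp
    then show False using k(4,5) by simp
  qed
  then have "k y = z" "k z = y" using in_P ne P by auto
  moreover have "k w = w" if "w \<notin> {a, x, y, z}" for w using apply_outside[OF k(1)] that P by simp
  ultimately show ?thesis using evenperm_double_transposition d k(5,6) by metis
qed

lemma evenperm_mem: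
  assumes g: "g \<in> G"
  shows "evenperm g"
proof -
  obtain a where a: "a \<in> P" using card_4 by fastforce
  show ?thesis
  proof (cases "g a = a")
    case True
    then show ?thesis using evenperm_mem_if_fixes_point[OF g a] by simp
  next
    case False
    then have ga: "g a \<in> P" "a \<noteq> g a" using apply_mem_iff[OF g] a by auto
    then obtain k where k: "k \<in> G" "k a = g a" "k (g a) = a"
      using tt a unfolding two_transitive_on_def by metis
    have "evenperm k" using evenperm_mem_if_swaps[OF k(1) a ga k(2,3)] .
    moreover have "evenperm (k \<circ> g)"
      using evenperm_mem_if_fixes_point[OF comp_mem[OF k(1) g] a] k(3) by simp
    ultimately show ?thesis
      using evenperm_comp[OF permutation_mem[OF finite_points k(1)] permutation_mem[OF finite_points g]]
      by simp
  qed
qed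

lemma mem_if_evenperm:
  assumes p: "p permutes P" "evenperm p"
  shows "p \<in> G"
proof -
  obtain a where "a \<in> P" using card_4 by fastforce
  then obtain b c d where P: "P = {a, b, c, d}" and d: "distinct [a, b, c, d]"
    by (rule card_eq_4_extend_point[OF card_4])
  then have ab: "a \<in> P" "b \<in> P" "a \<noteq> b" by auto
  have "p a \<in> P" "p b \<in> P" "p a \<noteq> p b"
    using permutes_in_image[OF p(1)] permutes_inj[OF p(1)] ab by (auto dest: injD)
  then obtain g where g: "g \<in> G" "g a = p a" "g b = p b"
    using tt ab unfolding two_transitive_on_def by metis
  have "inv g \<circ> p permutes P"
    using permutes_compose[OF p(1) permutes_mem[OF inv_mem[OF g(1)]]] .
  moreover have "evenperm (inv g \<circ> p)"
    using evenperm_comp[OF permutation_mem[OF finite_points inv_mem[OF g(1)]]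
        permutes_imp_permutation[OF finite_points p(1)]]
      evenperm_mem[OF inv_mem[OF g(1)]] p(2) by simp
  moreover have "(inv g \<circ> p) a = a" "(inv g \<circ> p) b = b"
    using inv_apply_mem[OF g(1)] by (simp_all flip: g(2,3))
  ultimately have "inv g \<circ> p = id" using evenperm_fixing_two_points_eq_id[OF _ _ _ _ P d] by blast
  then have "p = g"
    using permutes_inverses(1)[OF permutes_mem[OF g(1)]] by (metis comp_apply id_apply ext)
  then show ?thesis using g(1) by simp
qed

lemma eq_alternating_group: "G = {p. p permutes P \<and> evenperm p}"
  using permutes_mem evenperm_mem mem_if_evenperm by blast

end

end

section \<open>Counting pairs of points on the lines\<close>

lemma card_Sigma_Diff_singleton:
  assumes "finite A"
  shows "card (Sigma A (\<lambda>x. A - {x})) = card A * (card A - 1)"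
proof -
  have "card (Sigma A (\<lambda>x. A - {x})) = (\<Sum>x\<in>A. card (A - {x}))" using assms by simp
  also have "\<dots> = (\<Sum>x\<in>A. card A - 1)" using assms by (intro sum.cong) auto
  finally show ?thesis by simp
qed

lemma linear_space_finite: "linear_space P Lines \<Longrightarrow> finite P"
  by (simp add: linear_space_def)

lemma linear_space_line_subset: "linear_space P Lines \<Longrightarrow> l \<in> Lines \<Longrightarrow> l \<subseteq> P"
  by (simp add: linear_space_def)

lemma linear_space_card_line: "linear_space P Lines \<Longrightarrow> l \<in> Lines \<Longrightarrow> 2 \<le> card l"
  by (simp add: linear_space_def)

lemma linear_space_line_eq:
  assumes "linear_space P Lines" "l \<in> Lines" "l' \<in> Lines"
    and "x \<in> l" "y \<in> l" "x \<in> l'" "y \<in> l'" "x \<noteq> y"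
  shows "l = l'"
proof -
  have "x \<in> P" "y \<in> P" using assms linear_space_line_subset by blast+
  then have "\<exists>!l. l \<in> Lines \<and> x \<in> l \<and> y \<in> l" using assms(1,8) by (simp add: linear_space_def)
  then show ?thesis using assms(2-7) by blast
qed

lemma linear_space_line_through:
  assumes "linear_space P Lines" "x \<in> P" "y \<in> P" "x \<noteq> y"
  obtains l where "l \<in> Lines" "x \<in> l" "y \<in> l"
proof -
  have "\<exists>!l. l \<in> Lines \<and> x \<in> l \<and> y \<in> l" using assms by (simp add: linear_space_def)
  then show ?thesis using that by blast
qed

lemma linear_space_obtain_two_points:
  assumes "linear_space P Lines" "l \<in> Lines"
  obtains x y where "x \<in> l" "y \<in> l" "x \<noteq> y"
proof -
  have "finite l"
    using finite_subset[OF linear_space_line_subset linear_space_finite] assms by blast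
  moreover have "\<not> card l \<le> Suc 0" using linear_space_card_line[OF assms] by simp
  ultimately have "\<exists>x\<in>l. \<exists>y\<in>l. x \<noteq> y" by (simp add: card_le_Suc0_iff_eq)
  then show ?thesis using that by blast
qed

lemma linear_space_sum_card_pairs:
  assumes lin: "linear_space P Lines"
  shows "(\<Sum>l\<in>Lines. card l * (card l - 1)) = card P * (card P - 1)"
proof -
  have fin: "finite P" using lin by (rule linear_space_finite)
  have "Lines \<subseteq> Pow P" using linear_space_line_subset[OF lin] by blast
  then have fin_lines: "finite Lines" using fin by (metis finite_Pow_iff finite_subset)
  have fin_line: "finite l" if "l \<in> Lines" for l
    using finite_subset[OF linear_space_line_subset[OF lin that] fin] .
  have pairs: "Sigma P (\<lambda>x. P - {x}) = (\<Union>l\<in>Lines. Sigma l (\<lambda>x. l - {x}))"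
  proof (intro equalityI subsetI)
    fix p assume "p \<in> Sigma P (\<lambda>x. P - {x})"
    then obtain x y where "p = (x, y)" "x \<in> P" "y \<in> P" "x \<noteq> y" by blast
    then show "p \<in> (\<Union>l\<in>Lines. Sigma l (\<lambda>x. l - {x}))"
      using linear_space_line_through[OF lin] by blast
  qed (use linear_space_line_subset[OF lin] in blast)
  have "card (Sigma P (\<lambda>x. P - {x})) = (\<Sum>l\<in>Lines. card (Sigma l (\<lambda>x. l - {x})))"
    unfolding pairs
  proof (rule card_UN_disjoint[OF fin_lines])
    show "\<forall>l\<in>Lines. finite (Sigma l (\<lambda>x. l - {x}))" using fin_line by blast
    show "\<forall>l\<in>Lines. \<forall>l'\<in>Lines. l \<noteq> l' \<longrightarrow> Sigma l (\<lambda>x. l - {x}) \<inter> Sigma l' (\<lambda>x. l' - {x}) = {}"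
      using linear_space_line_eq[OF lin] by blast
  qed
  then show ?thesis using fin fin_line by (simp add: card_Sigma_Diff_singleton)
qed

context perm_group
begin

lemma apply_eq_if_image_eq:
  assumes stab: "set_stab G L \<subseteq> point_stab G \<sigma>"
    and g: "g \<in> G" "g' \<in> G" "g ` L = g' ` L"
  shows "g \<sigma> = g' \<sigma>"
proof -
  have "(inv g \<circ> g') ` L = inv g ` g ` L" by (simp only: image_comp g(3))
  also have "\<dots> = L" using inv_image_eq[OF g(1) refl] .
  finally have "inv g \<circ> g' \<in> set_stab G L" using g(1,2) by (simp add: set_stab_def comp_mem inv_mem)
  then have "inv g (g' \<sigma>) = \<sigma>" using stab by (auto simp: point_stab_def)
  then show ?thesis using apply_inv_mem[OF g(1)] by metis
qed

lemma images_mapping_point_eq: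
  assumes c: "c \<in> G"
  shows "(\<lambda>g. g ` L) ` {g \<in> G. g \<sigma> = c \<sigma>} = (\<lambda>A. c ` A) ` (\<lambda>g. g ` L) ` point_stab G \<sigma>"
proof (intro equalityI subsetI)
  fix A assume "A \<in> (\<lambda>g. g ` L) ` {g \<in> G. g \<sigma> = c \<sigma>}"
  then obtain g where g: "g \<in> G" "g \<sigma> = c \<sigma>" "A = g ` L" by blast
  have "inv c \<circ> g \<in> point_stab G \<sigma>"
    using c g(1,2) inv_apply_mem[OF c] by (simp add: point_stab_def comp_mem inv_mem)
  moreover have "A = c ` (inv c \<circ> g) ` L" using g(3) by (simp add: image_image apply_inv_mem[OF c])
  ultimately show "A \<in> (\<lambda>A. c ` A) ` (\<lambda>g. g ` L) ` point_stab G \<sigma>" by blast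
next
  fix A assume "A \<in> (\<lambda>A. c ` A) ` (\<lambda>g. g ` L) ` point_stab G \<sigma>"
  then obtain g where "g \<in> G" "g \<sigma> = \<sigma>" "A = c ` g ` L" by (auto simp: point_stab_def)
  then have "c \<circ> g \<in> G" "(c \<circ> g) \<sigma> = c \<sigma>" "A = (c \<circ> g) ` L" using c by (auto simp: comp_mem image_comp)
  then show "A \<in> (\<lambda>g. g ` L) ` {g \<in> G. g \<sigma> = c \<sigma>}" by blast
qed

lemma card_set_orbit:
  assumes fin: "finite P" and trans: "transitive_on G P" and \<sigma>: "\<sigma> \<in> P"
    and stab: "set_stab G L \<subseteq> point_stab G \<sigma>"
  shows "card ((\<lambda>g. g ` L) ` G) = card P * card ((\<lambda>g. g ` L) ` point_stab G \<sigma>)"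
proof -
  \<comment> \<open>the fibre over \<open>\<tau>\<close> of the map \<open>g ` L \<mapsto> g \<sigma>\<close>, well defined by \<open>apply_eq_if_image_eq\<close>\<close>
  define F where "F \<tau> = (\<lambda>g. g ` L) ` {g \<in> G. g \<sigma> = \<tau>}" for \<tau>
  have "(\<lambda>g. g ` L) ` G = (\<Union>\<tau>\<in>P. F \<tau>)"
    unfolding F_def using apply_mem_iff \<sigma> by blast
  moreover have "F \<tau> \<inter> F \<tau>' = {}" if "\<tau> \<noteq> \<tau>'" for \<tau> \<tau>'
    using that apply_eq_if_image_eq[OF stab] unfolding F_def by blast
  ultimately have "card ((\<lambda>g. g ` L) ` G) = (\<Sum>\<tau>\<in>P. card (F \<tau>))"
    using finite_group[OF fin] by (simp add: card_UN_disjoint[OF fin] F_def)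
  also have "\<dots> = (\<Sum>\<tau>\<in>P. card ((\<lambda>g. g ` L) ` point_stab G \<sigma>))"
  proof (rule sum.cong[OF refl])
    fix \<tau> assume "\<tau> \<in> P"
    then obtain c where c: "c \<in> G" "c \<sigma> = \<tau>" using trans \<sigma> unfolding transitive_on_def by blast
    have "F \<tau> = (\<lambda>A. c ` A) ` (\<lambda>g. g ` L) ` point_stab G \<sigma>"
      using images_mapping_point_eq[OF c(1), of L \<sigma>] c(2) by (simp add: F_def)
    moreover have "inj (\<lambda>A. c ` A)"
      using permutes_inj[OF permutes_mem[OF c(1)]] by (simp add: inj_on_def inj_image_eq_iff)
    ultimately show "card (F \<tau>) = card ((\<lambda>g. g ` L) ` point_stab G \<sigma>)"
      by (simp add: card_image inj_on_subset)
  qed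
  finally show ?thesis by simp
qed

end

lemma aut_group_image_line: "aut_group P Lines G \<Longrightarrow> g \<in> G \<Longrightarrow> l \<in> Lines \<Longrightarrow> g ` l \<in> Lines"
  unfolding aut_group_def by blast

lemma lines_eq_images:
  assumes lin: "linear_space P Lines" and aut: "aut_group P Lines G"
    and tt: "two_transitive_on G P" and L: "L \<in> Lines"
  shows "Lines = (\<lambda>g. g ` L) ` G"
proof (intro equalityI subsetI)
  fix l assume l: "l \<in> Lines"
  obtain x y where xy: "x \<in> l" "y \<in> l" "x \<noteq> y" using linear_space_obtain_two_points[OF lin l] .
  obtain a b where ab: "a \<in> L" "b \<in> L" "a \<noteq> b" using linear_space_obtain_two_points[OF lin L] .
  have "x \<in> P" "y \<in> P" "a \<in> P" "b \<in> P" using xy ab l L linear_space_line_subset[OF lin] by blast+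
  then obtain g where g: "g \<in> G" "g a = x" "g b = y"
    using tt ab(3) xy(3) unfolding two_transitive_on_def by metis
  have "g ` L \<in> Lines" using aut g(1) L by (rule aut_group_image_line)
  then have "l = g ` L" using linear_space_line_eq[OF lin l _ xy(1,2)] g ab xy(3) by blast
  then show "l \<in> (\<lambda>g. g ` L) ` G" using g(1) by blast
qed (use aut_group_image_line[OF aut _ L] in blast)

lemma card_line_pairs_dvd:
  assumes lin: "linear_space P Lines" and aut: "aut_group P Lines G"
    and tt: "two_transitive_on G P" and L: "L \<in> Lines" and \<sigma>: "\<sigma> \<in> P"
    and stab: "set_stab G L \<subseteq> point_stab G \<sigma>"
  shows "card L * (card L - 1) dvd card P - 1"
proof -
  interpret perm_group P G using aut by (rule perm_group_if_aut_group)
  have fin: "finite P" using lin by (rule linear_space_finite)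
  have lines: "Lines = (\<lambda>g. g ` L) ` G" using lin aut tt L by (rule lines_eq_images)
  have "card l = card L" if l: "l \<in> Lines" for l
  proof -
    obtain g where "g \<in> G" "l = g ` L" using l unfolding lines by blast
    then show ?thesis using card_image[OF inj_on_subset[OF permutes_inj[OF permutes_mem]]] by blast
  qed
  then have "card P * (card P - 1) = card Lines * (card L * (card L - 1))"
    using linear_space_sum_card_pairs[OF lin] by simp
  moreover obtain m where "card Lines = card P * m"
    using card_set_orbit[OF fin transitive_on_if_two_transitive_on[OF tt] \<sigma> stab] lines by metis
  moreover have "card P > 0" using fin \<sigma> card_gt_0_iff by blast
  ultimately have "card P - 1 = m * (card L * (card L - 1))" by (simp add: mult.assoc)
  then show ?thesis by simp
qed

section \<open>Stabilisers of the line\<close>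

lemma transitive_on_set_stab_if_feasible:
  assumes "feasible P G (flag_orbit G \<sigma> M)" and "id \<in> G"
  shows "transitive_on (set_stab (point_stab G \<sigma>) M) (M - {\<sigma>})"
proof -
  have "(\<sigma>, M) \<in> flag_orbit G \<sigma> M"
    unfolding flag_orbit_def by (rule image_eqI[where x = id]) (simp_all add: assms(2))
  then show ?thesis using assms(1) unfolding feasible_def by blast
qed

lemma point_stab_set_stab_commute: "point_stab (set_stab G A) x = set_stab (point_stab G x) A"
  by (auto simp: point_stab_def set_stab_def)

lemma two_transitive_on_set_stab_or_dvd:
  assumes lin: "linear_space P Lines" and aut: "aut_group P Lines G"
    and tt: "two_transitive_on G P" and L: "L \<in> Lines" and \<sigma>: "\<sigma> \<in> P" "\<sigma> \<notin> L"
    and stab_trans: "transitive_on (point_stab (set_stab G L) \<sigma>) (P - L - {\<sigma>})"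
  shows "two_transitive_on (set_stab G L) (P - L) \<or>
    (set_stab G L \<subseteq> point_stab G \<sigma> \<and> card L * (card L - 1) dvd card P - 1)"
proof (cases "set_stab G L \<subseteq> point_stab G \<sigma>")
  case True
  then show ?thesis using card_line_pairs_dvd[OF lin aut tt L \<sigma>(1)] by blast
next
  case False
  interpret perm_group P G using aut by (rule perm_group_if_aut_group)
  have LP: "L \<subseteq> P" using lin L by (rule linear_space_line_subset)
  obtain h where "h \<in> set_stab G L" "h \<sigma> \<noteq> \<sigma>" using False by (auto simp: set_stab_def point_stab_def)
  moreover have stable: "g ` (P - L) \<subseteq> P - L" if "g \<in> set_stab G L" for g
    using that unfolding set_stab_Diff[OF LP, symmetric] by (simp add: set_stab_def)
  moreover have "\<sigma> \<in> P - L" using \<sigma> by simp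
  ultimately have "transitive_on (set_stab G L) (P - L)"
    using perm_group.transitive_on_if_point_stab_transitive_on[OF perm_group_set_stab _ _ stab_trans]
    by blast
  then show ?thesis
    using perm_group.two_transitive_on_if_point_stab_transitive_on[OF perm_group_set_stab
        stable \<open>\<sigma> \<in> P - L\<close> _ stab_trans]
    by blast
qed

context perm_group
begin

lemma two_point_stab_eq_id_if_intransitive:
  assumes tt_pair: "two_transitive_on (set_stab G {\<alpha>, \<beta>}) (P - {\<alpha>, \<beta>})"
    and intrans: "\<not> transitive_on (point_stab (point_stab G \<alpha>) \<beta>) (P - {\<alpha>, \<beta>})"
    and n: "n \<in> point_stab (point_stab G \<alpha>) \<beta>"
  shows "n = id"
proof -
  interpret pair: perm_group P "set_stab G {\<alpha>, \<beta>}" by (rule perm_group_set_stab)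
  have n': "n \<in> G" "n \<alpha> = \<alpha>" "n \<beta> = \<beta>" using n by (auto simp: point_stab_def)
  have "id \<in> point_stab (point_stab G \<alpha>) \<beta>" by (simp add: point_stab_def id_mem)
  have fixed: "n x = x" if x: "x \<in> P - {\<alpha>, \<beta>}" for x
  proof (rule ccontr)
    assume moved: "n x \<noteq> x"
    have "n x \<in> P" using x apply_mem_iff[OF n'(1)] by simp
    moreover have "n x \<noteq> n \<alpha>" "n x \<noteq> n \<beta>" using x apply_eq_iff[OF n'(1)] by auto
    ultimately have "n x \<in> P - {\<alpha>, \<beta>}" using n'(2,3) by simp
    then have "transitive_on (point_stab (point_stab G \<alpha>) \<beta>) (P - {\<alpha>, \<beta>})"
      using pair.transitive_on_if_normalized[OF tt_pair conj_mem_two_point_stab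
          \<open>id \<in> point_stab (point_stab G \<alpha>) \<beta>\<close> n x] moved by blast
    then show False using intrans by contradiction
  qed
  show ?thesis
  proof
    fix w
    show "n w = id w"
      using fixed[of w] n'(2,3) permutes_not_in[OF permutes_mem[OF n'(1)], of w] by auto
  qed
qed

lemma card_le_2_if_two_point_stab_trivial:
  assumes "\<alpha> \<noteq> \<beta>"
    and tt_pair: "two_transitive_on (set_stab G {\<alpha>, \<beta>}) (P - {\<alpha>, \<beta>})"
    and trivial: "\<And>n. n \<in> point_stab (point_stab G \<alpha>) \<beta> \<Longrightarrow> n = id"
  shows "card (P - {\<alpha>, \<beta>}) \<le> 2"
proof (rule ccontr)
  assume "\<not> card (P - {\<alpha>, \<beta>}) \<le> 2"
  then have "3 \<le> card (P - {\<alpha>, \<beta>})" by simp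
  then obtain T where "T \<subseteq> P - {\<alpha>, \<beta>}" "card T = 3" by (rule obtain_subset_with_card_n)
  then obtain x y z where xyz: "x \<in> P - {\<alpha>, \<beta>}" "y \<in> P - {\<alpha>, \<beta>}" "z \<in> P - {\<alpha>, \<beta>}"
    "x \<noteq> y" "x \<noteq> z" "y \<noteq> z"
    unfolding card_3_iff by blast
  have swaps: "g \<alpha> = \<beta> \<and> g \<beta> = \<alpha>" if g: "g \<in> set_stab G {\<alpha>, \<beta>}" "g \<noteq> id" for g
  proof -
    have "g \<in> G" "g \<alpha> \<in> {\<alpha>, \<beta>}" "g \<beta> \<in> {\<alpha>, \<beta>}" using g(1) by (auto simp: set_stab_def)
    moreover have "g \<alpha> \<noteq> g \<beta>" using apply_eq_iff[OF \<open>g \<in> G\<close>] \<open>\<alpha> \<noteq> \<beta>\<close> by simp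
    moreover have "\<not> (g \<alpha> = \<alpha> \<and> g \<beta> = \<beta>)"
      using trivial[of g] g(2) \<open>g \<in> G\<close> by (auto simp: point_stab_def)
    ultimately show ?thesis by auto
  qed
  obtain g1 where g1: "g1 \<in> set_stab G {\<alpha>, \<beta>}" "g1 x = x" "g1 y = z"
    using tt_pair xyz unfolding two_transitive_on_def by metis
  obtain g2 where g2: "g2 \<in> set_stab G {\<alpha>, \<beta>}" "g2 x = y" "g2 y = x"
    using tt_pair xyz unfolding two_transitive_on_def by metis
  have "g1 \<noteq> id" "g2 \<noteq> id" using g1(3) g2(2) xyz(4,6) by auto
  then have "g1 \<alpha> = \<beta>" "g1 \<beta> = \<alpha>" "g2 \<alpha> = \<beta>" "g2 \<beta> = \<alpha>"
    using swaps g1(1) g2(1) by blast+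
  moreover have "g1 \<circ> g2 \<in> G" using g1(1) g2(1) comp_mem by (simp add: set_stab_def)
  ultimately have "g1 \<circ> g2 \<in> point_stab (point_stab G \<alpha>) \<beta>" by (simp add: point_stab_def)
  then have "g1 (g2 x) = x" using trivial by (metis comp_apply id_apply)
  then show False using g1(3) g2(2) xyz(5) by simp
qed

lemma sharp_if_two_point_stab_trivial:
  assumes tt: "two_transitive_on G P" and "\<alpha> \<in> P" "\<beta> \<in> P" "\<alpha> \<noteq> \<beta>"
    and trivial: "\<And>n. n \<in> point_stab (point_stab G \<alpha>) \<beta> \<Longrightarrow> n = id"
    and g: "g \<in> G" "x \<in> P" "y \<in> P" "x \<noteq> y" "g x = x" "g y = y"
  shows "g = id"
proof
  fix w
  obtain c where c: "c \<in> G" "c \<alpha> = x" "c \<beta> = y"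
    using tt assms(2-4) g(2-4) unfolding two_transitive_on_def by metis
  have "inv c x = \<alpha>" "inv c y = \<beta>" using inv_apply_mem[OF c(1)] c(2,3) by metis+
  then have "inv c \<circ> g \<circ> c \<in> point_stab (point_stab G \<alpha>) \<beta>"
    using c g(1,5,6) by (simp add: point_stab_def comp_mem inv_mem)
  then have "inv c (g (c (inv c w))) = inv c w" using trivial by (metis comp_apply id_apply)
  then have "inv c (g w) = inv c w" by (simp add: apply_inv_mem[OF c(1)])
  then show "g w = id w" by (metis apply_inv_mem[OF c(1)] id_apply)
qed

lemma alternating_four_if_two_point_stab_intransitive:
  assumes fin: "finite P" and four: "4 \<le> card P" and tt: "two_transitive_on G P"
    and ab: "\<alpha> \<in> P" "\<beta> \<in> P" "\<alpha> \<noteq> \<beta>"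
    and tt_pair: "two_transitive_on (set_stab G {\<alpha>, \<beta>}) (P - {\<alpha>, \<beta>})"
    and intrans: "\<not> transitive_on (point_stab (point_stab G \<alpha>) \<beta>) (P - {\<alpha>, \<beta>})"
  shows "card P = 4 \<and> G = {p. p permutes P \<and> evenperm p}"
proof -
  have trivial: "\<And>n. n \<in> point_stab (point_stab G \<alpha>) \<beta> \<Longrightarrow> n = id"
    using two_point_stab_eq_id_if_intransitive[OF tt_pair intrans] .
  have "card (P - {\<alpha>, \<beta>}) = card P - 2" using fin ab by (simp add: card_Diff_subset)
  then have card_4: "card P = 4"
    using card_le_2_if_two_point_stab_trivial[OF ab(3) tt_pair trivial] four by linarith
  moreover have "g = id"
    if "g \<in> G" "x \<in> P" "y \<in> P" "x \<noteq> y" "g x = x" "g y = y" for g x y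
    using sharp_if_two_point_stab_trivial[OF tt ab trivial that] .
  ultimately show ?thesis using eq_alternating_group[OF card_4 tt] by blast
qed

lemma half_transitive_on_two_point_stab:
  assumes "transitive_on (point_stab (set_stab G {\<alpha>, \<beta>}) \<sigma>) S"
  shows "half_transitive_on (point_stab (point_stab G \<alpha>) \<beta>) S"
proof -
  interpret K: perm_group P "point_stab (set_stab G {\<alpha>, \<beta>}) \<sigma>"
    by (rule perm_group.perm_group_point_stab[OF perm_group_set_stab])
  show ?thesis
  proof (rule K.half_transitive_on_if_normalized[OF assms])
    fix k n assume "k \<in> point_stab (set_stab G {\<alpha>, \<beta>}) \<sigma>" "n \<in> point_stab (point_stab G \<alpha>) \<beta>"
    then show "k \<circ> n \<circ> inv k \<in> point_stab (point_stab G \<alpha>) \<beta>"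
      using conj_mem_two_point_stab by (simp add: point_stab_def[of _ \<sigma>])
  qed
qed

lemma point_stab_set_stab_transitive_on_if_feasible:
  assumes "A \<subseteq> P" and "feasible P G (flag_orbit G \<sigma> (P - A))"
  shows "transitive_on (point_stab (set_stab G A) \<sigma>) (P - A - {\<sigma>})"
  using transitive_on_set_stab_if_feasible[OF assms(2) id_mem]
    perm_group.set_stab_Diff[OF perm_group_point_stab assms(1)]
  by (simp add: point_stab_set_stab_commute)

lemma two_point_line_cases:
  assumes fin: "finite P" and four: "4 \<le> card P" and tt: "two_transitive_on G P"
    and LP: "L \<subseteq> P" and "2 \<le> card L" and L: "L = {\<alpha>, \<beta>}"
    and stab_trans: "transitive_on (point_stab (set_stab G L) \<sigma>) (P - L - {\<sigma>})"
    and dichotomy: "two_transitive_on (set_stab G L) (P - L) \<or>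
      (set_stab G L \<subseteq> point_stab G \<sigma> \<and> card L * (card L - 1) dvd card P - 1)"
  shows "(card P = 4 \<and> G = {p. p permutes P \<and> evenperm p})
    \<or> transitive_on (point_stab (point_stab G \<alpha>) \<beta>) (P - {\<alpha>, \<beta>})
    \<or> (odd (card P) \<and> point_stab (point_stab G \<alpha>) \<beta> \<subseteq> point_stab G \<sigma> \<and>
       half_transitive_on (point_stab (point_stab G \<alpha>) \<beta>) (P - {\<alpha>, \<beta>, \<sigma>}))"
  using dichotomy
proof
  assume "two_transitive_on (set_stab G L) (P - L)"
  moreover have ab: "\<alpha> \<in> P" "\<beta> \<in> P" "\<alpha> \<noteq> \<beta>" using L LP \<open>2 \<le> card L\<close> by auto
  ultimately show ?thesis using alternating_four_if_two_point_stab_intransitive[OF fin four tt ab] L by blast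
next
  assume "set_stab G L \<subseteq> point_stab G \<sigma> \<and> card L * (card L - 1) dvd card P - 1"
  moreover have "card L = 2" "point_stab (point_stab G \<alpha>) \<beta> \<subseteq> set_stab G L"
    using L \<open>2 \<le> card L\<close> by (auto simp: point_stab_def set_stab_def card_insert_if split: if_splits)
  ultimately have "point_stab (point_stab G \<alpha>) \<beta> \<subseteq> point_stab G \<sigma>" "2 dvd card P - 1" by auto
  moreover have "odd (card P)" using \<open>2 dvd card P - 1\<close> four by presburger
  moreover have "P - L - {\<sigma>} = P - {\<alpha>, \<beta>, \<sigma>}" using L by auto
  ultimately show ?thesis using half_transitive_on_two_point_stab stab_trans L by metis
qed

end

theorem lemma3p2:
  fixes P :: "'a set" and Lines :: "'a set set" and G :: "('a \<Rightarrow> 'a) set"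
    and \<sigma> :: 'a and L :: "'a set"
  assumes lin: "linear_space P Lines"
    and aut: "aut_group P Lines G"
    and tt: "two_transitive_on G P"
    and four: "card P \<ge> 4"
    and Lline: "L \<in> Lines" and \<sigma>P: "\<sigma> \<in> P" and \<sigma>L: "\<sigma> \<notin> L"
    and feas: "feasible P G (flag_orbit G \<sigma> (P - L))"
  shows "(two_transitive_on (set_stab G L) (P - L) \<or>
          (set_stab G L \<subseteq> point_stab G \<sigma> \<and> card L * (card L - 1) dvd card P - 1))
       \<and> (\<forall>\<alpha> \<beta>. L = {\<alpha>, \<beta>} \<longrightarrow>
            (card P = 4 \<and> G = {p. p permutes P \<and> evenperm p})
          \<or> transitive_on (point_stab (point_stab G \<alpha>) \<beta>) (P - {\<alpha>, \<beta>})
          \<or> (odd (card P) \<and> point_stab (point_stab G \<alpha>) \<beta> \<subseteq> point_stab G \<sigma> \<and>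
             half_transitive_on (point_stab (point_stab G \<alpha>) \<beta>) (P - {\<alpha>, \<beta>, \<sigma>})))"
proof -
  interpret perm_group P G using aut by (rule perm_group_if_aut_group)
  have LP: "L \<subseteq> P" using lin Lline by (rule linear_space_line_subset)
  have stab_trans: "transitive_on (point_stab (set_stab G L) \<sigma>) (P - L - {\<sigma>})"
    using LP feas by (rule point_stab_set_stab_transitive_on_if_feasible)
  have dichotomy: "two_transitive_on (set_stab G L) (P - L) \<or>
      (set_stab G L \<subseteq> point_stab G \<sigma> \<and> card L * (card L - 1) dvd card P - 1)"
    using lin aut tt Lline \<sigma>P \<sigma>L stab_trans by (rule two_transitive_on_set_stab_or_dvd)
  show ?thesis
    using dichotomy two_point_line_cases[OF linear_space_finite[OF lin] four tt LP
        linear_space_card_line[OF lin Lline] _ stab_trans dichotomy]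
    by blast
qed

end
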